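(* Let $G$ be a connected bipartite graph with color classes $E$ and $V$, and let $\Gamma$ be a spanning tree of $G$ inducing the hypertree $\mathbf f$ of $(V,E)$. Let $a,b,c$ be distinct elements of $E$ such that the unique path in $\Gamma$ from $c$ to $a$ passes through $b$. If $c$ can transfer valence to $a$ at $\mathbf f$, then $b$ can transfer valence to $a$ at $\mathbf f$.
   Context: A hypertree of $(V,E)$ is a function $\mathbf f\colon E\to\mathbf N$ such that some spanning tree of $G$ has degree $\mathbf f(e)+1$ at every $e\in E$; $\Gamma$ induces $\mathbf f$ if it has these degrees. For $x,y\in E$, $x$ can transfer valence to $y$ at $\mathbf f$ if the function obtained from $\mathbf f$ by decreasing $\mathbf f(x)$ by $1$ and increasing $\mathbf f(y)$ by $1$ is again a hypertree. *)

theory Defs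
  imports Main
begin

definition bip_graph :: "'e set \<Rightarrow> 'v set \<Rightarrow> ('e \<times> 'v) set \<Rightarrow> bool" where
  "bip_graph E V G \<longleftrightarrow> finite E \<and> finite V \<and> G \<subseteq> E \<times> V"

definition verts :: "'e set \<Rightarrow> 'v set \<Rightarrow> ('e + 'v) set" where
  "verts E V = Inl ` E \<union> Inr ` V"

definition adj :: "('e \<times> 'v) set \<Rightarrow> ('e + 'v) \<Rightarrow> ('e + 'v) \<Rightarrow> bool" where
  "adj H x y \<longleftrightarrow> (\<exists>e v. (e, v) \<in> H \<and>
      ((x = Inl e \<and> y = Inr v) \<or> (x = Inr v \<and> y = Inl e)))"

definition walk :: "('e \<times> 'v) set \<Rightarrow> ('e + 'v) list \<Rightarrow> ('e + 'v) \<Rightarrow> ('e + 'v) \<Rightarrow> bool" where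
  "walk H p x y \<longleftrightarrow> p \<noteq> [] \<and> hd p = x \<and> last p = y \<and>
      (\<forall>i. Suc i < length p \<longrightarrow> adj H (p ! i) (p ! Suc i))"

definition path :: "('e \<times> 'v) set \<Rightarrow> ('e + 'v) list \<Rightarrow> ('e + 'v) \<Rightarrow> ('e + 'v) \<Rightarrow> bool" where
  "path H p x y \<longleftrightarrow> walk H p x y \<and> distinct p"

definition connected_bip :: "'e set \<Rightarrow> 'v set \<Rightarrow> ('e \<times> 'v) set \<Rightarrow> bool" where
  "connected_bip E V H \<longleftrightarrow> (\<forall>x \<in> verts E V. \<forall>y \<in> verts E V. \<exists>p. walk H p x y)"

definition is_tree :: "'e set \<Rightarrow> 'v set \<Rightarrow> ('e \<times> 'v) set \<Rightarrow> bool" where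
  "is_tree E V H \<longleftrightarrow> (\<forall>x \<in> verts E V. \<forall>y \<in> verts E V. \<exists>!p. path H p x y)"

definition spanning_tree :: "'e set \<Rightarrow> 'v set \<Rightarrow> ('e \<times> 'v) set \<Rightarrow> ('e \<times> 'v) set \<Rightarrow> bool" where
  "spanning_tree E V G T \<longleftrightarrow> T \<subseteq> G \<and> is_tree E V T"

definition deg :: "('e \<times> 'v) set \<Rightarrow> 'e \<Rightarrow> nat" where
  "deg T e = card {v. (e, v) \<in> T}"

definition induces :: "'e set \<Rightarrow> 'v set \<Rightarrow> ('e \<times> 'v) set \<Rightarrow> ('e \<times> 'v) set \<Rightarrow> ('e \<Rightarrow> nat) \<Rightarrow> bool" where
  "induces E V G T f \<longleftrightarrow> spanning_tree E V G T \<and> (\<forall>e \<in> E. deg T e = f e + 1)"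

definition hypertree :: "'e set \<Rightarrow> 'v set \<Rightarrow> ('e \<times> 'v) set \<Rightarrow> ('e \<Rightarrow> nat) \<Rightarrow> bool" where
  "hypertree E V G f \<longleftrightarrow> (\<exists>T. induces E V G T f)"

text \<open>x can transfer valence to y at f: decreasing f x by one (which requires
  f x \<ge> 1 for the result to be N-valued) and increasing f y by one gives a hypertree.\<close>

definition can_transfer :: "'e set \<Rightarrow> 'v set \<Rightarrow> ('e \<times> 'v) set \<Rightarrow> ('e \<Rightarrow> nat) \<Rightarrow> 'e \<Rightarrow> 'e \<Rightarrow> bool" where
  "can_transfer E V G f x y \<longleftrightarrow> 1 \<le> f x \<and> hypertree E V G (f(x := f x - 1, y := f y + 1))"

end

theory Submission
  imports Defs
begin

(* Let D be the component of a in \<Gamma> with the vertex b deleted; by hypothesis c \<notin> D.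
   A tree \<Gamma>' witnessing the transfer from c to a has, at the E-vertices of D, the degrees
   of \<Gamma> plus one at a.  The edges of \<Gamma> at these vertices already connect D, so the forest
   \<Gamma>' has more edges there than fit inside D: some edge e'v of \<Gamma>' leaves D.  The path of \<Gamma>
   from v to a enters D through an edge bw; exchanging bw for e'v gives a spanning tree in
   which b has lost one degree and e' has gained one.  Repeating with e' in place of b, the
   component of a with e' deleted is strictly smaller than D, so the process ends with
   e' = a. *)

lemma adj_sym: "adj H x y \<Longrightarrow> adj H y x"
  unfolding adj_def by blast

lemma adj_irrefl: "\<not> adj H x x"
  unfolding adj_def by auto

lemma adj_mono: "H \<subseteq> H' \<Longrightarrow> adj H x y \<Longrightarrow> adj H' x y"
  unfolding adj_def by blast

lemma adj_Inl_Inr [simp]: "adj H (Inl e) (Inr v) \<longleftrightarrow> (e, v) \<in> H"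
  unfolding adj_def by auto

lemma adj_Inr_Inl [simp]: "adj H (Inr v) (Inl e) \<longleftrightarrow> (e, v) \<in> H"
  unfolding adj_def by auto

lemma adj_cases [consumes 1]:
  assumes "adj H x y"
  obtains e v where "(e, v) \<in> H" "x = Inl e" "y = Inr v"
    | e v where "(e, v) \<in> H" "x = Inr v" "y = Inl e"
  using assms unfolding adj_def by blast

definition joins :: "'e \<times> 'v \<Rightarrow> 'e + 'v \<Rightarrow> 'e + 'v \<Rightarrow> bool" where
  "joins g u w \<longleftrightarrow> {u, w} = {Inl (fst g), Inr (snd g)}"

lemma adj_iff_joins: "adj H u w \<longleftrightarrow> (\<exists>g\<in>H. joins g u w)"
  unfolding adj_def joins_def by (force simp: doubleton_eq_iff)

lemma joins_sym: "joins g u w \<Longrightarrow> joins g w u"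
  unfolding joins_def by (simp add: insert_commute)

lemma joins_ends: "joins g u w \<Longrightarrow> Inl (fst g) \<in> {u, w} \<and> Inr (snd g) \<in> {u, w}"
  unfolding joins_def by simp

lemma joins_inj: "joins g u w \<Longrightarrow> joins g' u w \<Longrightarrow> g = g'"
  unfolding joins_def by (auto simp: doubleton_eq_iff prod_eq_iff)

lemma joins_other_end: "joins g u w \<Longrightarrow> joins g u w' \<Longrightarrow> w = w'"
  unfolding joins_def by (auto simp: doubleton_eq_iff)

lemma joins_Inl: "joins g (Inl e) w \<longleftrightarrow> fst g = e \<and> w = Inr (snd g)"
  unfolding joins_def by (auto simp: doubleton_eq_iff)

lemma walk_Nil [simp]: "\<not> walk H [] x y"
  by (simp add: walk_def)

lemma walk_single [simp]: "walk H [z] x y \<longleftrightarrow> x = z \<and> y = z"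
  by (auto simp: walk_def)

lemma walk_Cons_Cons [simp]:
  "walk H (x # y # p) u z \<longleftrightarrow> u = x \<and> adj H x y \<and> walk H (y # p) y z"
  by (auto simp: walk_def less_Suc_eq_0_disj)

lemma walk_hd: "walk H p x y \<Longrightarrow> p = z # q \<Longrightarrow> x = z"
  by (simp add: walk_def)

lemma walk_Cons: "walk H p y z \<Longrightarrow> adj H x y \<Longrightarrow> walk H (x # p) x z"
  by (cases p) (auto dest: walk_hd)

lemma walk_append:
  "walk H (p @ z # q) x y \<longleftrightarrow> walk H (p @ [z]) x z \<and> walk H (z # q) z y"
proof (induction p arbitrary: x)
  case Nil then show ?case by (cases q) auto
next
  case (Cons u p)
  show ?case
  proof (cases p)
    case Nil then show ?thesis by auto
  next
    case (Cons v p')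
    then show ?thesis using Cons.IH[of v] by auto
  qed
qed

lemma walk_snoc:
  assumes "walk H p x y" "adj H y z"
  shows "walk H (p @ [z]) x z"
proof (cases p rule: rev_cases)
  case (snoc q u)
  with assms show ?thesis using walk_append[of H q u "[z]" x z] by (auto simp: walk_def)
qed (use assms in simp)

lemma walk_rev: "walk H p x y \<Longrightarrow> walk H (rev p) y x"
proof (induction p arbitrary: x)
  case (Cons u p)
  show ?case
  proof (cases p)
    case (Cons v p')
    then have "walk H (rev p) y v" "adj H v u" using Cons.prems Cons.IH[of v] by (auto intro: adj_sym)
    then show ?thesis using walk_snoc Cons.prems \<open>p = v # p'\<close> by fastforce
  qed (use Cons.prems in auto)
qed simp

lemma walk_mono: "walk H p x y \<Longrightarrow> H \<subseteq> H' \<Longrightarrow> walk H' p x y"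
  unfolding walk_def using adj_mono by blast

lemma path_Cons: "path H p y z \<Longrightarrow> adj H x y \<Longrightarrow> x \<notin> set p \<Longrightarrow> path H (x # p) x z"
  unfolding path_def by (auto intro: walk_Cons)

lemma path_snoc: "path H p x y \<Longrightarrow> adj H y z \<Longrightarrow> z \<notin> set p \<Longrightarrow> path H (p @ [z]) x z"
  unfolding path_def by (auto intro: walk_snoc)

lemma path_rev: "path H p x y \<Longrightarrow> path H (rev p) y x"
  unfolding path_def by (auto intro: walk_rev)

lemma path_mono: "path H p x y \<Longrightarrow> H \<subseteq> H' \<Longrightarrow> path H' p x y"
  unfolding path_def by (auto intro: walk_mono)

lemma path_ends_in_set: "path H p x y \<Longrightarrow> x \<in> set p \<and> y \<in> set p"
  by (auto simp: path_def walk_def)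

lemma path_loop: "path H p x x \<Longrightarrow> p = [x]"
  by (cases p) (auto simp: path_def walk_def split: if_splits)

lemma walk_imp_path: "walk H p x y \<Longrightarrow> \<exists>q. path H q x y \<and> set q \<subseteq> set p"
proof (induction p arbitrary: x)
  case (Cons z p)
  show ?case
  proof (cases p)
    case Nil then show ?thesis using Cons.prems by (auto simp: path_def intro: exI[of _ "[z]"])
  next
    case (Cons u p')
    then have x: "z = x" "adj H x u" and "walk H p u y" using Cons.prems by auto
    then obtain q where q: "path H q u y" "set q \<subseteq> set p" using Cons.IH by blast
    show ?thesis
    proof (cases "x \<in> set q")
      case True
      then obtain q1 q2 where "q = q1 @ x # q2" by (meson split_list)
      then have "path H (x # q2) x y" using q(1) walk_append[of H q1 x q2 u y] by (simp add: path_def)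
      then show ?thesis using q(2) \<open>q = q1 @ x # q2\<close> by fastforce
    next
      case False
      then show ?thesis using path_Cons[OF q(1) x(2)] q(2) x(1) by fastforce
    qed
  qed
qed simp

definition component :: "('e \<times> 'v) set \<Rightarrow> 'e + 'v \<Rightarrow> ('e + 'v) set" where
  "component F r = {x. (adj F)\<^sup>*\<^sup>* r x}"

lemma component_refl [simp]: "r \<in> component F r"
  by (simp add: component_def)

lemma component_step: "x \<in> component F r \<Longrightarrow> adj F x y \<Longrightarrow> y \<in> component F r"
  by (simp add: component_def rtranclp.rtrancl_into_rtrancl)

lemma component_sym: "x \<in> component F r \<Longrightarrow> r \<in> component F x"
proof -
  have "symp (adj F)" by (auto intro: sympI adj_sym)
  then show "x \<in> component F r \<Longrightarrow> r \<in> component F x"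
    by (simp add: component_def symp_rtranclp sympD)
qed

lemma component_trans: "x \<in> component F r \<Longrightarrow> y \<in> component F x \<Longrightarrow> y \<in> component F r"
  unfolding component_def by (auto intro: rtranclp_trans)

lemma component_mono:
  assumes "F \<subseteq> F'" shows "component F r \<subseteq> component F' r"
proof
  fix x assume "x \<in> component F r"
  then have "(adj F)\<^sup>*\<^sup>* r x" by (simp add: component_def)
  then show "x \<in> component F' r"
    by (induction rule: rtranclp_induct) (auto intro: component_step adj_mono[OF assms])
qed

lemma walk_imp_component: "walk F p r x \<Longrightarrow> set p \<subseteq> component F r"
proof (induction p arbitrary: r)
  case (Cons z p)
  then show ?case
    by (cases p) (auto intro: component_trans component_step[OF component_refl])
qed simp

lemma component_imp_walk:
  assumes "x \<in> component F r" shows "\<exists>p. walk F p r x"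
  using assms[unfolded component_def mem_Collect_eq]
proof (induction rule: rtranclp_induct)
  case base then show ?case by (rule exI[of _ "[r]"]) simp
next
  case (step y z) then show ?case using walk_snoc by blast
qed

lemma component_imp_path: "x \<in> component F r \<Longrightarrow> \<exists>p. path F p r x \<and> set p \<subseteq> component F r"
  by (meson component_imp_walk walk_imp_component walk_imp_path order_trans)

lemma component_subset_ends: "component F r \<subseteq> insert r (Inl ` fst ` F \<union> Inr ` snd ` F)"
proof
  fix x assume "x \<in> component F r"
  then have "(adj F)\<^sup>*\<^sup>* r x" by (simp add: component_def)
  then show "x \<in> insert r (Inl ` fst ` F \<union> Inr ` snd ` F)"
  proof (induction rule: rtranclp_induct)
    case (step y z)
    then obtain g where "g \<in> F" "joins g y z" using adj_iff_joins by metis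
    then have "z \<in> {Inl (fst g), Inr (snd g)}" unfolding joins_def by blast
    then show ?case using \<open>g \<in> F\<close> by auto
  qed simp
qed

lemma finite_component: "finite F \<Longrightarrow> finite (component F r)"
  using component_subset_ends finite_subset by fastforce

lemma component_subset_verts: "F \<subseteq> S \<times> W \<Longrightarrow> r \<in> verts S W \<Longrightarrow> component F r \<subseteq> verts S W"
  using component_subset_ends[of F r] by (force simp: verts_def)

lemma component_enters:
  assumes "y \<in> component F x" "x \<notin> D" "y \<in> D"
  obtains u z where "u \<in> component {g \<in> F. Inl (fst g) \<notin> D \<and> Inr (snd g) \<notin> D} x"
    "u \<notin> D" "adj F u z" "z \<in> D"
proof -
  let ?F = "{g \<in> F. Inl (fst g) \<notin> D \<and> Inr (snd g) \<notin> D}"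
  have "(adj F)\<^sup>*\<^sup>* x y" using assms(1) by (simp add: component_def)
  then have "x \<notin> D \<Longrightarrow> \<exists>u z. u \<in> component ?F x \<and> u \<notin> D \<and> adj F u z \<and> z \<in> D"
  proof (induction rule: converse_rtranclp_induct)
    case base then show ?case using assms(3) by blast
  next
    case (step x x')
    show ?case
    proof (cases "x' \<in> D")
      case True then show ?thesis using step by (intro exI[of _ x] exI[of _ x']) simp
    next
      case False
      obtain g where "g \<in> F" "joins g x x'" using step(1) adj_iff_joins by metis
      then have "g \<in> ?F" using False step(4) joins_ends by fastforce
      then have "x' \<in> component ?F x"
        using \<open>joins g x x'\<close> by (meson adj_iff_joins component_refl component_step)
      then show ?thesis using step(3)[OF False] component_trans by blast
    qed
  qed
  then show ?thesis using assms(2) that by meson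
qed

subsection \<open>Edge counts of forests and connected graphs\<close>

lemma walk_last_edge:
  assumes "walk F p r x" "x \<noteq> r"
  obtains q y where "p = q @ [y, x]" "walk F (q @ [y]) r y" "adj F y x"
proof -
  obtain p' where "p = p' @ [x]"
    using assms(1) by (cases p rule: rev_cases) (auto simp: walk_def)
  moreover have "p' \<noteq> []" using assms calculation by (auto simp: walk_def)
  ultimately obtain q y where "p = q @ [y, x]" by (cases p' rule: rev_cases) auto
  with assms(1) show thesis using that walk_append[of F q y "[x]" r x] by auto
qed

text \<open>Sending each x \<noteq> r to the last edge of a shortest walk from r to x is injective.\<close>

lemma card_component_le:
  assumes "finite F"
  shows "card (component F r) \<le> card {g \<in> F. Inl (fst g) \<in> component F r} + 1"
proof -
  define C where "C = component F r"
  define dist where "dist x = (LEAST n. \<exists>p. walk F p r x \<and> length p = n)" for x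
  have dist_le: "dist x \<le> length p" if "walk F p r x" for p x
    unfolding dist_def using that by (intro Least_le) blast
  have last_edge: "\<exists>g\<in>F. \<exists>y. dist y < dist x \<and> joins g y x" if x: "x \<in> C - {r}" for x
  proof -
    have "\<exists>p. walk F p r x \<and> length p = dist x"
      unfolding dist_def by (rule LeastI_ex) (use component_imp_walk x C_def in blast)
    then obtain p where p: "walk F p r x" "length p = dist x" by blast
    then obtain q y where "p = q @ [y, x]" "walk F (q @ [y]) r y" "adj F y x"
      using walk_last_edge x by blast
    moreover from this(2) have "dist y < dist x"
      using dist_le p(2) \<open>p = q @ [y, x]\<close> by fastforce
    ultimately show ?thesis by (meson adj_iff_joins)
  qed
  define \<phi> where "\<phi> x = (SOME g. g \<in> F \<and> (\<exists>y. dist y < dist x \<and> joins g y x))" for x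
  have \<phi>: "\<phi> x \<in> F \<and> (\<exists>y. dist y < dist x \<and> joins (\<phi> x) y x)" if "x \<in> C - {r}" for x
    using someI_ex[OF last_edge[OF that, unfolded Bex_def]] unfolding \<phi>_def by blast
  have "inj_on \<phi> (C - {r})"
  proof (rule inj_onI)
    fix x x' assume xx: "x \<in> C - {r}" "x' \<in> C - {r}" "\<phi> x = \<phi> x'"
    obtain y where y: "dist y < dist x" "joins (\<phi> x) y x" using \<phi> xx(1) by blast
    obtain y' where y': "dist y' < dist x'" "joins (\<phi> x) y' x'" using \<phi>[OF xx(2)] xx(3) by auto
    from y(2) y'(2) have "{y, x} = {y', x'}" by (simp add: joins_def)
    then show "x = x'" unfolding doubleton_eq_iff using y(1) y'(1) by auto
  qed
  moreover have "\<phi> ` (C - {r}) \<subseteq> {g \<in> F. Inl (fst g) \<in> C}"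
  proof (rule image_subsetI)
    fix x assume x: "x \<in> C - {r}"
    then obtain y where y: "joins (\<phi> x) y x" and "\<phi> x \<in> F" using \<phi> by blast
    then have "adj F x y" using adj_iff_joins joins_sym by blast
    then have "y \<in> C" using x component_step unfolding C_def by blast
    then show "\<phi> x \<in> {g \<in> F. Inl (fst g) \<in> C}"
      using joins_ends[OF y] x \<open>\<phi> x \<in> F\<close> by auto
  qed
  ultimately have "card (C - {r}) \<le> card {g \<in> F. Inl (fst g) \<in> C}"
    using assms by (intro card_inj_on_le) auto
  moreover have "card C = card (C - {r}) + 1"
    using card.remove[OF finite_component[OF assms] component_refl] by (simp add: C_def)
  ultimately show ?thesis unfolding C_def[symmetric] by linarith
qed

definition forest :: "('e \<times> 'v) set \<Rightarrow> bool" where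
  "forest H \<longleftrightarrow> (\<forall>p q x y. path H p x y \<longrightarrow> path H q x y \<longrightarrow> p = q)"

lemma forest_mono: "H \<subseteq> H' \<Longrightarrow> forest H' \<Longrightarrow> forest H"
  unfolding forest_def by (meson path_mono)

lemma path_length_le:
  assumes "finite F" "path F p x y"
  shows "length p \<le> card (Inl ` fst ` F \<union> Inr ` snd ` F) + 1"
proof -
  let ?X = "Inl ` fst ` F \<union> Inr ` snd ` F"
  have "set p \<subseteq> component F x"
    using assms(2) walk_imp_component unfolding path_def by blast
  also note component_subset_ends
  finally have "card (set p) \<le> card (insert x ?X)"
    using assms(1) by (intro card_mono) auto
  also have "\<dots> \<le> card ?X + 1"
    using assms(1) by (simp add: card_insert_if)
  finally show ?thesis using assms(2) by (simp add: path_def distinct_card)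
qed

lemma forest_has_leaf:
  assumes "finite F" "F \<noteq> {}" "forest F"
  obtains l u where "adj F l u" "\<And>u'. adj F l u' \<Longrightarrow> u' = u"
proof -
  obtain e v where "(e, v) \<in> F" using assms(2) by auto
  then have "path F [Inl e, Inr v] (Inl e) (Inr v)"
    by (simp add: path_def)
  moreover have "\<forall>q. (\<exists>x y. path F q x y) \<longrightarrow> length q < card (Inl ` fst ` F \<union> Inr ` snd ` F) + 2"
    using path_length_le[OF assms(1)] by fastforce
  ultimately obtain p where p: "\<exists>x y. path F p x y"
    and longest: "\<And>q x y. path F q x y \<Longrightarrow> length q \<le> length p"
    using ex_has_greatest_nat[of "\<lambda>p. \<exists>x y. path F p x y" _ length] by blast
  then obtain x y where pxy: "path F p x y" by blast
  have "2 \<le> length p" using longest[OF \<open>path F [Inl e, Inr v] _ _\<close>] by simp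
  then obtain a z rest where "p = a # z # rest" by (metis Suc_le_length_iff numeral_2_eq_2)
  with pxy have pz: "p = x # z # rest" by (simp add: path_def)
  have "u' = z" if "adj F x u'" for u'
  proof (rule ccontr)
    assume "u' \<noteq> z"
    show False
    proof (cases "u' \<in> set p")
      case False
      then have "path F (u' # p) u' y" using path_Cons[OF pxy adj_sym[OF that]] by blast
      then show False using longest by fastforce
    next
      case True
      then obtain p1 p2 where p12: "p = p1 @ u' # p2" by (meson split_list)
      then have "path F (p1 @ [u']) x u'"
        using pxy walk_append[of F p1 u' p2 x y] by (auto simp: path_def)
      moreover have "path F [x, u'] x u'"
        using that adj_irrefl by (auto simp: path_def)
      ultimately have "p1 @ [u'] = [x, u']" using assms(3) unfolding forest_def by blast
      then have "p1 = [x]" by simp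
      then show False using p12 pz \<open>u' \<noteq> z\<close> by simp
    qed
  qed
  moreover have "adj F x z" using pxy pz by (simp add: path_def)
  ultimately show thesis using that by blast
qed

lemma leaf_not_end:
  assumes "\<And>u'. adj F l u' \<Longrightarrow> u' = u" "joins g l u" "g' \<in> F - {g}"
  shows "l \<notin> {Inl (fst g'), Inr (snd g')}"
proof
  assume "l \<in> {Inl (fst g'), Inr (snd g')}"
  then obtain w where "joins g' l w" by (auto simp: joins_def insert_commute)
  moreover from this have "w = u" using assms(1,3) adj_iff_joins by blast
  ultimately show False using joins_inj[OF _ assms(2)] assms(3) by blast
qed

lemma card_forest_le:
  assumes "finite X" "X \<noteq> {}" "forest F" "\<forall>g\<in>F. Inl (fst g) \<in> X \<and> Inr (snd g) \<in> X"
  shows "card F + 1 \<le> card X"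
  using assms
proof (induction "card F" arbitrary: F X rule: less_induct)
  case less
  have "F \<subseteq> Inl -` X \<times> Inr -` X" using less.prems(4) by auto
  moreover have "finite (Inl -` X \<times> Inr -` X)"
    using less.prems(1) by (intro finite_cartesian_product finite_vimageI) auto
  ultimately have finF: "finite F" by (rule finite_subset)
  show ?case
  proof (cases "F = {}")
    case True then show ?thesis using less.prems(1,2) by (simp add: Suc_le_eq card_gt_0_iff)
  next
    case False
    obtain l u where lu: "adj F l u" "\<And>u'. adj F l u' \<Longrightarrow> u' = u"
      using forest_has_leaf[OF finF False less.prems(3)] by blast
    obtain g where g: "g \<in> F" "joins g l u" using lu(1) adj_iff_joins by blast
    have "{l, u} \<subseteq> X"
      using g(2) less.prems(4) g(1) unfolding joins_def by simp
    have "l \<noteq> u" using lu(1) adj_irrefl by metis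
    have "Inl (fst g') \<in> X - {l} \<and> Inr (snd g') \<in> X - {l}" if "g' \<in> F - {g}" for g'
      using leaf_not_end[OF lu(2) g(2) that] less.prems(4) that by auto
    then have "card (F - {g}) + 1 \<le> card (X - {l})"
      using less.prems(1,3) \<open>{l, u} \<subseteq> X\<close> \<open>l \<noteq> u\<close>
      by (intro less.hyps[OF card_Diff1_less[OF finF g(1)]]) (auto intro: forest_mono)
    moreover have "card (F - {g}) + 1 = card F"
      using card.remove[OF finF g(1)] by simp
    moreover have "card (X - {l}) + 1 = card X"
      using card.remove[OF less.prems(1), of l] \<open>{l, u} \<subseteq> X\<close> by simp
    ultimately show ?thesis by linarith
  qed
qed

lemma adj_Diff_edge:
  assumes "adj F a b" "a \<noteq> x" "b \<noteq> x" "joins g x z"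
  shows "adj (F - {g}) a b"
proof -
  obtain g' where "g' \<in> F" "joins g' a b" using assms(1) adj_iff_joins by metis
  moreover have "g' \<noteq> g"
  proof
    assume "g' = g"
    then have "x \<in> {a, b}" using calculation(2) assms(4) unfolding joins_def by (metis insertI1)
    then show False using assms(2,3) by blast
  qed
  ultimately show ?thesis using adj_iff_joins by blast
qed

lemma walk_Diff_edge: "walk F p a b \<Longrightarrow> x \<notin> set p \<Longrightarrow> joins g x z \<Longrightarrow> walk (F - {g}) p a b"
proof (induction p arbitrary: a)
  case (Cons c p)
  then show ?case by (cases p) (auto intro!: adj_Diff_edge[of F _ _ x g z])
qed simp

lemma component_insert_edge:
  assumes "joins g u w" "w \<in> component F u"
  shows "component (insert g F) r = component F r"
proof
  show "component (insert g F) r \<subseteq> component F r"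
  proof
    fix x assume "x \<in> component (insert g F) r"
    then have "(adj (insert g F))\<^sup>*\<^sup>* r x" by (simp add: component_def)
    then show "x \<in> component F r"
    proof (induction rule: rtranclp_induct)
      case (step y z)
      then obtain g' where g': "g' \<in> insert g F" "joins g' y z" using adj_iff_joins by metis
      show ?case
      proof (cases "g' = g")
        case True
        then have "{y, z} = {u, w}" using g'(2) assms(1) by (simp add: joins_def)
        then have "y = u \<and> z = w \<or> y = w \<and> z = u" by (simp add: doubleton_eq_iff)
        then have "z \<in> component F y" using assms(2) component_sym by blast
        with step.IH show ?thesis by (rule component_trans)
      next
        case False
        then have "adj F y z" using g' adj_iff_joins by blast
        with step.IH show ?thesis by (rule component_step)
      qed
    qed simp
  qed
qed (simp add: component_mono subset_insertI)

lemma component_Diff_edge_bypass: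
  assumes "joins g x u" "adj F x u'" "u' \<noteq> u"
    and "walk F p u y" "x \<notin> set p" "walk F q u' y" "x \<notin> set q"
  shows "u \<in> component (F - {g}) x"
proof -
  have "adj (F - {g}) x u'"
  proof -
    obtain g' where "g' \<in> F" "joins g' x u'" using assms(2) adj_iff_joins by metis
    moreover have "g' \<noteq> g" using calculation(2) assms(1,3) joins_other_end by metis
    ultimately show ?thesis using adj_iff_joins by blast
  qed
  moreover have "y \<in> component (F - {g}) u'"
    using walk_imp_component[OF walk_Diff_edge[OF assms(6,7,1)]] assms(6)
    by (auto simp: walk_def)
  moreover have "u \<in> component (F - {g}) y"
    using walk_imp_component[OF walk_rev[OF walk_Diff_edge[OF assms(4,5,1)]]] assms(4)
    by (auto simp: walk_def)
  ultimately show ?thesis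
    by (meson component_refl component_step component_trans)
qed

lemma redundant_edge:
  "path F p x y \<Longrightarrow> path F q x y \<Longrightarrow> p \<noteq> q \<Longrightarrow>
    \<exists>g\<in>F. \<exists>u w. joins g u w \<and> w \<in> component (F - {g}) u"
proof (induction p arbitrary: q x)
  case (Cons z p)
  obtain q' where q: "q = x # q'"
    using Cons.prems(2) by (cases q) (auto simp: path_def walk_def)
  have "z = x" using Cons.prems(1) by (simp add: path_def walk_def)
  show ?case
  proof (cases "p = [] \<or> q' = []")
    case True
    then have "x = y" using Cons.prems q \<open>z = x\<close> by (auto simp: path_def walk_def)
    then show ?thesis using Cons.prems(1-3) path_loop by metis
  next
    case False
    then obtain u p' u' q'' where pu: "p = u # p'" and qu: "q' = u' # q''"
      by (meson neq_Nil_conv)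
    have p: "adj F x u" "walk F p u y" "x \<notin> set p"
      using Cons.prems(1) pu \<open>z = x\<close> by (auto simp: path_def)
    have q': "adj F x u'" "walk F q' u' y" "x \<notin> set q'"
      using Cons.prems(2) q qu by (auto simp: path_def)
    show ?thesis
    proof (cases "u = u'")
      case True
      then have "path F p u y" "path F q' u y" "p \<noteq> q'"
        using Cons.prems q pu qu \<open>z = x\<close> by (auto simp: path_def)
      then show ?thesis using Cons.IH by blast
    next
      case False
      obtain g where g: "g \<in> F" "joins g x u" using p(1) adj_iff_joins by metis
      then have "u \<in> component (F - {g}) x"
        using component_Diff_edge_bypass q'(1) False p(2,3) q'(2,3) by metis
      then show ?thesis using g by blast
    qed
  qed
qed (simp add: path_def)

subsection \<open>Spanning trees\<close>

lemma card_verts: "finite S \<Longrightarrow> finite W \<Longrightarrow> card (verts S W) = card S + card W"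
  unfolding verts_def by (subst card_Un_disjoint) (auto simp: card_image)

lemma path_from_outside:
  assumes "path T p x y" "T \<subseteq> S \<times> W" "x \<notin> verts S W"
  shows "p = [x]"
proof -
  have "set p \<subseteq> component T x"
    using assms(1) walk_imp_component unfolding path_def by blast
  moreover have "component T x = {x}"
  proof -
    have "\<not> adj T x y" for y using assms(2,3) by (auto elim!: adj_cases simp: verts_def)
    then show ?thesis unfolding component_def by (auto elim: converse_rtranclpE)
  qed
  ultimately show ?thesis
    using assms(1) by (cases p) (auto simp: path_def walk_def subset_singleton_iff)
qed

lemma tree_imp_forest:
  assumes "is_tree S W T" "T \<subseteq> S \<times> W"
  shows "forest T"
  unfolding forest_def
proof (intro allI impI)
  fix p q x y assume pq: "path T p x y" "path T q x y"
  consider "x \<in> verts S W" "y \<in> verts S W" | "x \<notin> verts S W" | "y \<notin> verts S W" by blast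
  then show "p = q"
  proof cases
    case 1 then show ?thesis using assms(1) pq unfolding is_tree_def by blast
  next
    case 2 then show ?thesis using path_from_outside assms(2) pq by metis
  next
    case 3
    then have "rev p = [y]" "rev q = [y]"
      using path_from_outside[OF path_rev assms(2)] pq by blast+
    then show ?thesis by (metis rev_rev_ident)
  qed
qed

lemma tree_component:
  assumes "is_tree S W T" "r \<in> verts S W"
  shows "verts S W \<subseteq> component T r"
proof
  fix x assume "x \<in> verts S W"
  then obtain p where "path T p r x" using assms unfolding is_tree_def by blast
  then show "x \<in> component T r"
    using walk_imp_component path_ends_in_set unfolding path_def by blast
qed

lemma connected_forest_imp_tree:
  assumes "forest T" "r \<in> verts S W" "verts S W \<subseteq> component T r"
  shows "is_tree S W T"
  unfolding is_tree_def
proof (intro ballI)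
  fix x y assume "x \<in> verts S W" "y \<in> verts S W"
  then have "y \<in> component T x" using assms(3) component_sym component_trans by blast
  then obtain p where "path T p x y" using component_imp_path by blast
  then show "\<exists>!p. path T p x y" using assms(1) unfolding forest_def by blast
qed

lemma card_tree:
  assumes "finite S" "finite W" "T \<subseteq> S \<times> W" "is_tree S W T" "s \<in> S"
  shows "card T + 1 = card S + card W"
proof -
  have r: "Inl s \<in> verts S W" using assms(5) by (simp add: verts_def)
  have "card T + 1 \<le> card (verts S W)"
    using assms(1-3) r by (intro card_forest_le tree_imp_forest[OF assms(4,3)])
      (auto simp: verts_def)
  moreover have "component T (Inl s) = verts S W"
    using tree_component[OF assms(4) r] component_subset_verts[OF assms(3) r] by blast
  moreover have "{g \<in> T. Inl (fst g) \<in> verts S W} = T"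
    using assms(3) by (auto simp: verts_def)
  moreover have "finite T"
    using assms(1-3) finite_subset by blast
  ultimately show ?thesis
    using card_component_le[of T "Inl s"] card_verts[OF assms(1,2)] by simp
qed

lemma connected_card_imp_tree:
  assumes "finite S" "finite W" "T \<subseteq> S \<times> W" "r \<in> verts S W"
    and "verts S W \<subseteq> component T r" "card T + 1 = card S + card W"
  shows "is_tree S W T"
proof -
  have "finite T" using assms(1-3) finite_subset by blast
  have "forest T"
  proof (rule ccontr)
    assume "\<not> forest T"
    then obtain p q x y where "path T p x y" "path T q x y" "p \<noteq> q" unfolding forest_def by blast
    then obtain g u w where g: "g \<in> T" "joins g u w" "w \<in> component (T - {g}) u"
      using redundant_edge by blast
    have "component (T - {g}) r = component T r"
      using component_insert_edge[OF g(2,3)] g(1) by (simp add: insert_absorb)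
    then have "component (T - {g}) r = verts S W"
      using assms(5) component_subset_verts[OF assms(3,4)] by blast
    moreover have "card {g' \<in> T - {g}. Inl (fst g') \<in> verts S W} \<le> card (T - {g})"
      using \<open>finite T\<close> by (intro card_mono) auto
    ultimately have "card (verts S W) \<le> card (T - {g}) + 1"
      using card_component_le[of "T - {g}" r] \<open>finite T\<close> by simp
    then show False
      using assms(6) card_verts[OF assms(1,2)] card.remove[OF \<open>finite T\<close> g(1)] by simp
  qed
  then show ?thesis using assms(4,5) by (rule connected_forest_imp_tree)
qed

lemma tree_exchange:
  assumes "finite S" "finite W" "T \<subseteq> S \<times> W" "is_tree S W T"
    and "g \<in> T" "g' \<in> S \<times> W" "g' \<notin> T"
    and "joins g u w" "w \<in> component (insert g' (T - {g})) u"
  shows "is_tree S W (insert g' (T - {g}))"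
proof -
  let ?T = "insert g' (T - {g})" and ?r = "Inl (fst g)"
  have r: "?r \<in> verts S W" using assms(3,5) by (auto simp: verts_def)
  have "verts S W \<subseteq> component T ?r" by (rule tree_component[OF assms(4) r])
  also have "\<dots> \<subseteq> component (insert g ?T) ?r" by (rule component_mono) auto
  also have "\<dots> = component ?T ?r" by (rule component_insert_edge[OF assms(8,9)])
  finally have "verts S W \<subseteq> component ?T ?r" .
  moreover have "finite T" using assms(1-3) finite_subset by blast
  then have "card ?T = card T"
    using assms(5,7) card.remove[OF \<open>finite T\<close> assms(5)] by simp
  moreover have "card T + 1 = card S + card W"
    using card_tree[OF assms(1-4)] assms(3,5) by force
  moreover have "?T \<subseteq> S \<times> W" using assms(3,6) by blast
  ultimately show ?thesis using connected_card_imp_tree[OF assms(1,2) _ r] by simp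
qed

lemma finite_deg_set: "finite T \<Longrightarrow> finite {v. (x, v) \<in> T}"
  by (rule finite_subset[of _ "snd ` T"]) force+

lemma sum_deg:
  assumes "finite F" "finite A"
  shows "(\<Sum>x\<in>A. deg F x) = card {g \<in> F. fst g \<in> A}"
proof -
  have "{g \<in> F. fst g \<in> A} = Sigma A (\<lambda>x. {v. (x, v) \<in> F})" by auto
  then show ?thesis using assms by (simp add: deg_def finite_deg_set)
qed

lemma deg_exchange:
  assumes "finite T" "(e, w) \<in> T" "(e', w') \<notin> T" "e \<noteq> e'"
  shows "deg (insert (e', w') (T - {(e, w)})) x + (if x = e then 1 else 0)
    = deg T x + (if x = e' then 1 else 0)"
proof -
  let ?T = "insert (e', w') (T - {(e, w)})"
  consider "x = e" | "x = e'" | "x \<noteq> e" "x \<noteq> e'" by blast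
  then show ?thesis
  proof cases
    case 1
    then have "{v. (x, v) \<in> ?T} = {v. (x, v) \<in> T} - {w}" using assms(4) by auto
    then show ?thesis
      using 1 assms(2,4) card.remove[OF finite_deg_set[OF assms(1)], of w x] by (simp add: deg_def)
  next
    case 2
    then have "{v. (x, v) \<in> ?T} = insert w' {v. (x, v) \<in> T}" using assms(4) by auto
    then show ?thesis using 2 assms(1,3,4) by (simp add: deg_def finite_deg_set)
  next
    case 3
    then have "{v. (x, v) \<in> ?T} = {v. (x, v) \<in> T}" by auto
    then show ?thesis using 3 by (simp add: deg_def)
  qed
qed

lemma tree_deg_pos:
  assumes "finite T" "is_tree S W T" "a \<in> S" "b \<in> S" "a \<noteq> b"
  shows "0 < deg T b"
proof -
  have "Inl a \<in> component T (Inl b)"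
    using tree_component[OF assms(2)] assms(3,4) by (auto simp: verts_def)
  then obtain y where "adj T (Inl b) y"
    using assms(5) unfolding component_def by (auto elim: converse_rtranclpE)
  then obtain v where "(b, v) \<in> T" by (auto elim: adj_cases)
  then show ?thesis using finite_deg_set[OF assms(1)] by (auto simp: deg_def card_gt_0_iff)
qed

lemma forest_edge_leaving_component:
  assumes "finite F" "finite F'" "forest F'"
    and "(\<Sum>x | Inl x \<in> component F r. deg F x) < (\<Sum>x | Inl x \<in> component F r. deg F' x)"
  shows "\<exists>(x, v) \<in> F'. Inl x \<in> component F r \<and> Inr v \<notin> component F r"
proof (rule ccontr)
  let ?C = "component F r"
  let ?A = "{x. Inl x \<in> ?C}"
  assume leaving: "\<not> ?thesis"
  have "finite ?C" using assms(1) by (rule finite_component)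
  then have "finite ?A" using finite_vimageI[of ?C Inl] by (simp add: vimage_def)
  have "card ?C \<le> card {g \<in> F. Inl (fst g) \<in> ?C} + 1"
    using assms(1) by (rule card_component_le)
  also have "\<dots> = (\<Sum>x\<in>?A. deg F x) + 1"
    using sum_deg[OF assms(1) \<open>finite ?A\<close>] by simp
  also have "\<dots> < (\<Sum>x\<in>?A. deg F' x) + 1"
    using assms(4) by simp
  also have "\<dots> = card {g \<in> F'. fst g \<in> ?A} + 1"
    using sum_deg[OF assms(2) \<open>finite ?A\<close>] by simp
  also have "\<dots> \<le> card ?C"
  proof (rule card_forest_le)
    show "?C \<noteq> {}" using component_refl[of r F] by blast
  qed (use \<open>finite ?C\<close> leaving forest_mono[OF _ assms(3)] in auto)
  finally show False by simp
qed

subsection \<open>Branches\<close>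

text \<open>Deleting the vertex Inl e is modelled by deleting its edges.\<close>

definition branch :: "('e \<times> 'v) set \<Rightarrow> 'e \<Rightarrow> 'e \<Rightarrow> ('e + 'v) set" where
  "branch T e a = component {g \<in> T. fst g \<noteq> e} (Inl a)"

lemma Inl_notin_branch: "a \<noteq> e \<Longrightarrow> Inl e \<notin> branch T e a"
  using component_subset_ends[of "{g \<in> T. fst g \<noteq> e}" "Inl a"] unfolding branch_def by auto

lemma branch_subset_verts: "T \<subseteq> S \<times> W \<Longrightarrow> a \<in> S \<Longrightarrow> branch T e a \<subseteq> verts S W"
  unfolding branch_def by (rule component_subset_verts) (auto simp: verts_def)

lemma branch_closed:
  assumes "a \<noteq> e" "x \<in> branch T e a" "adj T x y" "y \<noteq> Inl e"
  shows "y \<in> branch T e a"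
proof -
  obtain g where g: "g \<in> T" "joins g x y" using assms(3) adj_iff_joins by metis
  have "x \<noteq> Inl e" using assms(1,2) Inl_notin_branch by metis
  then have "fst g \<noteq> e" using g(2) assms(4) joins_ends by fastforce
  then have "adj {g \<in> T. fst g \<noteq> e} x y" using g adj_iff_joins by blast
  then show ?thesis using assms(2) component_step unfolding branch_def by blast
qed

lemma branch_exit_unique:
  assumes "a \<noteq> e" "forest T" "(e, w) \<in> T" "(e, w') \<in> T"
    and "Inr w \<in> branch T e a" "Inr w' \<in> branch T e a"
  shows "w = w'"
proof -
  have extend: "path T (p @ [Inl e]) (Inl a) (Inl e)"
    if p: "path {g \<in> T. fst g \<noteq> e} p (Inl a) (Inr u)" "set p \<subseteq> branch T e a" "(e, u) \<in> T"
    for p u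
  proof (rule path_snoc)
    show "path T p (Inl a) (Inr u)" using path_mono[OF p(1)] by blast
    show "Inl e \<notin> set p" using p(2) Inl_notin_branch[OF assms(1)] by blast
  qed (simp add: p(3))
  obtain p where p: "path {g \<in> T. fst g \<noteq> e} p (Inl a) (Inr w)" "set p \<subseteq> branch T e a"
    using assms(5) component_imp_path unfolding branch_def by blast
  obtain p' where p': "path {g \<in> T. fst g \<noteq> e} p' (Inl a) (Inr w')" "set p' \<subseteq> branch T e a"
    using assms(6) component_imp_path unfolding branch_def by blast
  have "p @ [Inl e] = p' @ [Inl e]"
    using assms(2) extend[OF p assms(3)] extend[OF p' assms(4)] unfolding forest_def by blast
  then have "last p = last p'" by simp
  then show ?thesis using p(1) p'(1) by (simp add: path_def walk_def)
qed

lemma branch_exit_edge: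
  assumes "a \<noteq> e" "Inl a \<in> component T y" "y \<notin> branch T e a"
  obtains w where "(e, w) \<in> T" "Inr w \<in> branch T e a" "Inl e \<in> component (T - {(e, w)}) y"
proof -
  let ?D = "branch T e a"
  have "Inl a \<in> ?D" by (simp add: branch_def)
  obtain u z where u: "u \<in> component {g \<in> T. Inl (fst g) \<notin> ?D \<and> Inr (snd g) \<notin> ?D} y"
    "u \<notin> ?D" "adj T u z" "z \<in> ?D"
    by (rule component_enters[OF assms(2,3) \<open>Inl a \<in> ?D\<close>])
  have "u = Inl e" using branch_closed[OF assms(1) u(4) adj_sym[OF u(3)]] u(2) by blast
  with u(3) obtain w where w: "z = Inr w" "(e, w) \<in> T" by (auto elim: adj_cases)
  have "{g \<in> T. Inl (fst g) \<notin> ?D \<and> Inr (snd g) \<notin> ?D} \<subseteq> T - {(e, w)}"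
    using u(4) w(1) by auto
  then have "Inl e \<in> component (T - {(e, w)}) y"
    using u(1) \<open>u = Inl e\<close> component_mono by blast
  then show thesis using that w u(4) by blast
qed

lemma branch_shrinks:
  assumes "a \<noteq> e" "forest T" "(e, w) \<in> T" "Inr w \<in> branch T e a"
  shows "branch (insert (e', v) (T - {(e, w)})) e' a \<subseteq> branch T e a"
proof
  fix x assume "x \<in> branch (insert (e', v) (T - {(e, w)})) e' a"
  then have "(adj {g \<in> insert (e', v) (T - {(e, w)}). fst g \<noteq> e'})\<^sup>*\<^sup>* (Inl a) x"
    by (simp add: branch_def component_def)
  then show "x \<in> branch T e a"
  proof (induction rule: rtranclp_induct)
    case base then show ?case by (simp add: branch_def)
  next
    case (step y z)
    obtain g where "g \<in> insert (e', v) (T - {(e, w)})" "fst g \<noteq> e'" "joins g y z"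
      using step(2) unfolding adj_iff_joins by blast
    then have g: "g \<in> T" "g \<noteq> (e, w)" "joins g y z" by auto
    have "z \<noteq> Inl e"
    proof
      assume "z = Inl e"
      then have "fst g = e" "y = Inr (snd g)" using g(3) joins_sym joins_Inl by metis+
      then have "(e, snd g) \<in> T" using g(1) by (metis prod.collapse)
      then have "snd g = w"
        using branch_exit_unique[OF assms(1,2) _ assms(3) _ assms(4)] step.IH \<open>y = Inr (snd g)\<close>
        by blast
      then show False using g(2) \<open>fst g = e\<close> by (simp add: prod_eq_iff)
    qed
    then show ?case using branch_closed[OF assms(1) step.IH] g adj_iff_joins by blast
  qed
qed

lemma path_avoiding_branch:
  assumes "\<forall>p. path T p (Inl c) (Inl a) \<longrightarrow> Inl e \<in> set p" "a \<noteq> e"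
  shows "Inl c \<notin> branch T e a"
proof
  assume "Inl c \<in> branch T e a"
  then obtain p where p: "path {g \<in> T. fst g \<noteq> e} p (Inl a) (Inl c)" "set p \<subseteq> branch T e a"
    using component_imp_path unfolding branch_def by blast
  have "path T p (Inl a) (Inl c)" using path_mono[OF p(1)] by blast
  then have "Inl e \<in> set (rev p)" using assms(1) path_rev by blast
  then have "Inl e \<in> branch T e a" using p(2) by auto
  then show False using Inl_notin_branch[OF assms(2)] by blast
qed

lemma branch_exchange:
  assumes "finite S" "finite W" "T \<subseteq> S \<times> W" "is_tree S W T" "a \<in> S" "a \<noteq> e"
    and "(e', v) \<in> S \<times> W" "Inl e' \<in> branch T e a" "Inr v \<notin> branch T e a"
  obtains T' where "T' \<subseteq> insert (e', v) T" "is_tree S W T'"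
    "\<And>x. deg T' x + (if x = e then 1 else 0) = deg T x + (if x = e' then 1 else 0)"
    "branch T' e' a \<subseteq> branch T e a"
proof -
  let ?D = "branch T e a"
  have "Inl a \<in> component T (Inr v)"
    using tree_component[OF assms(4)] assms(5,7) by (auto simp: verts_def)
  then obtain w where w: "(e, w) \<in> T" "Inr w \<in> ?D" "Inl e \<in> component (T - {(e, w)}) (Inr v)"
    using branch_exit_edge[OF assms(6) _ assms(9)] by blast
  let ?T = "insert (e', v) (T - {(e, w)})"
  have "(e', v) \<notin> T"
  proof
    assume "(e', v) \<in> T"
    then have "Inr v \<in> ?D" using branch_closed[OF assms(6,8)] by simp
    with assms(9) show False by blast
  qed
  have "e' \<noteq> e" using assms(8) Inl_notin_branch[OF assms(6)] by blast
  have "?D \<subseteq> component ?T (Inl a)"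
    unfolding branch_def by (rule component_mono) auto
  then have "Inl e' \<in> component ?T (Inl a)" "Inr w \<in> component ?T (Inl a)"
    using w(2) assms(8) by blast+
  then have "Inr w \<in> component ?T (Inl e')" by (meson component_sym component_trans)
  moreover have "Inl e' \<in> component ?T (Inr v)"
    by (rule component_step[OF component_refl]) simp
  moreover have "Inl e \<in> component ?T (Inr v)"
    using component_mono[of "T - {(e, w)}" ?T] w(3) by blast
  then have "Inr v \<in> component ?T (Inl e)" by (rule component_sym)
  ultimately have "Inr w \<in> component ?T (Inl e)" by (meson component_trans)
  moreover have "joins (e, w) (Inl e) (Inr w)" by (simp add: joins_def)
  ultimately have "is_tree S W ?T"
    using tree_exchange[OF assms(1-4) w(1) assms(7) \<open>(e', v) \<notin> T\<close>] by blast
  have "finite T" using assms(1-3) finite_subset by blast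
  show thesis
  proof (rule that)
    show "?T \<subseteq> insert (e', v) T" by blast
    show "deg ?T x + (if x = e then 1 else 0) = deg T x + (if x = e' then 1 else 0)" for x
      using deg_exchange[OF \<open>finite T\<close> w(1) \<open>(e', v) \<notin> T\<close> \<open>e' \<noteq> e\<close>[symmetric]] .
    show "branch ?T e' a \<subseteq> ?D"
      by (rule branch_shrinks[OF assms(6) tree_imp_forest[OF assms(4,3)] w(1,2)])
  qed fact
qed

lemma branch_step:
  assumes "finite S" "finite W" "G \<subseteq> S \<times> W" "spanning_tree S W G T'" "spanning_tree S W G T"
    and "a \<in> S" "a \<noteq> e" "\<And>x. Inl x \<in> branch T e a \<Longrightarrow> deg T' x = deg T x + (if x = a then 1 else 0)"
  obtains T'' e' where "spanning_tree S W G T''" "Inl e' \<in> branch T e a"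
    "\<And>x. deg T'' x + (if x = e then 1 else 0) = deg T x + (if x = e' then 1 else 0)"
    "branch T'' e' a \<subseteq> branch T e a"
proof -
  let ?D = "branch T e a" and ?A = "{x. Inl x \<in> branch T e a}" and ?Te = "{g \<in> T. fst g \<noteq> e}"
  have T: "T \<subseteq> S \<times> W" "is_tree S W T" and T': "T' \<subseteq> S \<times> W" "is_tree S W T'"
    using assms(3-5) by (auto simp: spanning_tree_def)
  have "finite T" "finite T'" using T(1) T'(1) assms(1,2) finite_subset by blast+
  have "finite ?D" unfolding branch_def using \<open>finite T\<close> by (simp add: finite_component)
  then have "finite ?A" using finite_vimageI[of ?D Inl] by (simp add: vimage_def)
  have "a \<in> ?A" "e \<notin> ?A" using Inl_notin_branch[OF assms(7)] by (auto simp: branch_def)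
  have "(\<Sum>x\<in>?A. deg ?Te x) = (\<Sum>x\<in>?A. deg T x)"
    using \<open>e \<notin> ?A\<close> unfolding deg_def by (intro sum.cong) (auto intro!: arg_cong[where f = card])
  also have "\<dots> < (\<Sum>x\<in>?A. deg T x + (if x = a then 1 else 0))"
    using \<open>a \<in> ?A\<close> \<open>finite ?A\<close> by (simp add: sum.distrib)
  also have "\<dots> = (\<Sum>x\<in>?A. deg T' x)"
    using assms(8) by (intro sum.cong) auto
  finally have "\<exists>(x, v) \<in> T'. Inl x \<in> ?D \<and> Inr v \<notin> ?D"
    using forest_edge_leaving_component[OF _ \<open>finite T'\<close> tree_imp_forest[OF T'(2,1)]]
      \<open>finite T\<close> unfolding branch_def by simp
  then obtain e' v where ev: "(e', v) \<in> T'" "Inl e' \<in> ?D" "Inr v \<notin> ?D" by blast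
  obtain T'' where T'': "T'' \<subseteq> insert (e', v) T" "is_tree S W T''"
    "\<And>x. deg T'' x + (if x = e then 1 else 0) = deg T x + (if x = e' then 1 else 0)"
    "branch T'' e' a \<subseteq> ?D"
    using branch_exchange[OF assms(1,2) T assms(6,7) _ ev(2,3)] ev(1) T'(1) by blast
  have "spanning_tree S W G T''"
    using T''(1,2) ev(1) assms(4,5) by (auto simp: spanning_tree_def)
  then show thesis using that ev(2) T''(3,4) by blast
qed

text \<open>Each exchange moves the missing degree from e to e' and, unless e' = a, strictly
  shrinks the branch.\<close>

lemma branch_descent:
  assumes "finite S" "finite W" "G \<subseteq> S \<times> W" "spanning_tree S W G T'" "spanning_tree S W G T"
    and "a \<in> S" "\<And>x. Inl x \<in> branch T e a \<Longrightarrow> deg T' x = deg T x + (if x = a then 1 else 0)"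
  shows "\<exists>T''. spanning_tree S W G T'' \<and>
    (\<forall>x. deg T'' x + (if x = e then 1 else 0) = deg T x + (if x = a then 1 else 0))"
  using assms(5,7)
proof (induction "card (branch T e a)" arbitrary: T e rule: less_induct)
  case less
  show ?case
  proof (cases "e = a")
    case True then show ?thesis using less.prems(1) by auto
  next
    case False
    let ?D = "branch T e a"
    obtain T'' e' where T'': "spanning_tree S W G T''" "Inl e' \<in> ?D"
      "\<And>x. deg T'' x + (if x = e then 1 else 0) = deg T x + (if x = e' then 1 else 0)"
      "branch T'' e' a \<subseteq> ?D"
      using branch_step[OF assms(1-4) less.prems(1) assms(6) False[symmetric] less.prems(2)] by blast
    show ?thesis
    proof (cases "e' = a")
      case True
      then show ?thesis using T''(1,3) unfolding True by blast
    next
      case False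
      have "T \<subseteq> S \<times> W" using less.prems(1) assms(3) by (auto simp: spanning_tree_def)
      then have "finite T" using assms(1,2) finite_subset by blast
      then have "finite ?D" unfolding branch_def by (simp add: finite_component)
      moreover have "Inl e' \<notin> branch T'' e' a" using Inl_notin_branch[of a e'] False by blast
      moreover have "Inl e \<notin> ?D" using Inl_notin_branch[of a e] \<open>e \<noteq> a\<close> by blast
      ultimately have "card (branch T'' e' a) < card ?D"
        using T''(2,4) psubset_card_mono[of ?D "branch T'' e' a"] by blast
      moreover have "deg T' x = deg T'' x + (if x = a then 1 else 0)"
        if "Inl x \<in> branch T'' e' a" for x
      proof -
        have "Inl x \<in> ?D" "x \<noteq> e" "x \<noteq> e'"
          using that T''(4) \<open>Inl e \<notin> ?D\<close> \<open>Inl e' \<notin> branch T'' e' a\<close> by auto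
        then show ?thesis using less.prems(2) T''(3)[of x] by simp
      qed
      ultimately obtain T2 where T2: "spanning_tree S W G T2"
        "\<forall>x. deg T2 x + (if x = e' then 1 else 0) = deg T'' x + (if x = a then 1 else 0)"
        using less.hyps T''(1) by blast
      have "deg T2 x + (if x = e then 1 else 0) = deg T x + (if x = a then 1 else 0)" for x
        using T2(2)[rule_format, of x] T''(3)[of x] by linarith
      then show ?thesis using T2(1) by blast
    qed
  qed
qed

subsection \<open>Valence transfer\<close>

lemma can_transfer_intro:
  assumes "finite E" "finite V" "G \<subseteq> E \<times> V" "spanning_tree E V G T" "a \<in> E" "b \<in> E" "a \<noteq> b"
    and "\<forall>x\<in>E. deg T x + (if x = b then 1 else 0) = f x + 1 + (if x = a then 1 else 0)"
  shows "can_transfer E V G f b a"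
proof -
  have "T \<subseteq> E \<times> V" "is_tree E V T"
    using assms(3,4) by (auto simp: spanning_tree_def)
  then have "0 < deg T b"
    using assms(1,2,5-7) finite_subset by (intro tree_deg_pos[of T E V a]) blast+
  moreover have "deg T b = f b" using assms(6-8) by auto
  moreover have "deg T x = (f(b := f b - 1, a := f a + 1)) x + 1" if "x \<in> E" for x
    using assms(7,8) that calculation by auto
  ultimately show ?thesis
    using assms(4) unfolding can_transfer_def hypertree_def induces_def by auto
qed

theorem lemma4p2:
  fixes E :: "'e set" and V :: "'v set" and G \<Gamma> :: "('e \<times> 'v) set"
    and f :: "'e \<Rightarrow> nat" and a b c :: 'e
  assumes "bip_graph E V G"
    and "connected_bip E V G"
    and "induces E V G \<Gamma> f"
    and "a \<in> E" and "b \<in> E" and "c \<in> E"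
    and "a \<noteq> b" and "b \<noteq> c" and "a \<noteq> c"
    and "\<forall>p. path \<Gamma> p (Inl c) (Inl a) \<longrightarrow> Inl b \<in> set p"
    and "can_transfer E V G f c a"
  shows "can_transfer E V G f b a"
proof -
  have fin: "finite E" "finite V" and "G \<subseteq> E \<times> V" using assms(1) by (auto simp: bip_graph_def)
  have \<Gamma>: "spanning_tree E V G \<Gamma>" "\<forall>x\<in>E. deg \<Gamma> x = f x + 1"
    using assms(3) by (auto simp: induces_def)
  obtain T' where T': "spanning_tree E V G T'" "\<forall>x\<in>E. deg T' x = (f(c := f c - 1, a := f a + 1)) x + 1"
    using assms(11) by (auto simp: can_transfer_def hypertree_def induces_def)
  have "deg T' x = deg \<Gamma> x + (if x = a then 1 else 0)" if "Inl x \<in> branch \<Gamma> b a" for x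
  proof -
    have "x \<in> E"
      using that branch_subset_verts[of \<Gamma> E V a b] \<Gamma>(1) \<open>G \<subseteq> E \<times> V\<close> assms(4)
      by (auto simp: spanning_tree_def verts_def)
    moreover have "x \<noteq> b" "x \<noteq> c"
      using that Inl_notin_branch[OF assms(7)] path_avoiding_branch[OF assms(10,7)] by auto
    ultimately show ?thesis using T'(2) \<Gamma>(2) by auto
  qed
  then obtain T2 where "spanning_tree E V G T2"
    "\<forall>x. deg T2 x + (if x = b then 1 else 0) = deg \<Gamma> x + (if x = a then 1 else 0)"
    using branch_descent[OF fin \<open>G \<subseteq> E \<times> V\<close> T'(1) \<Gamma>(1) assms(4)] by blast
  then show ?thesis
    using can_transfer_intro[OF fin \<open>G \<subseteq> E \<times> V\<close> _ assms(4,5,7)] \<Gamma>(2) by simp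
qed

end
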